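(* Let $r$ be an extended regular expression and $\mathfrak L=\mathrm{next}(r)$. Then (1) for every $A\in\mathfrak L$ and all $a,b\in A$: $\llbracket\partial_a(r)\rrbracket=\llbracket\partial_b(r)\rrbracket$; (2) for every $a\in\Sigma$ with $a\notin\bigcup\mathfrak L$: $\llbracket\partial_a(r)\rrbracket=\emptyset$.
   Context: $\Sigma$ is a countable (possibly infinite) alphabet, $\Sigma^*$ the set of finite words, $\epsilon$ the empty word. Literals are sets of symbols drawn from a fixed family $U\subseteq\mathcal P(\Sigma)$ containing $\emptyset$, $\Sigma$ and all singletons and closed under union, intersection and complement $\overline{A}=\Sigma\setminus A$. Extended regular expressions (EREs) are generated by $r,s ::= \epsilon \mid A \mid r+s \mid r\cdot s \mid r^* \mid r\,\&\,s \mid \neg r$ with $A$ a literal; the empty literal is written $\emptyset$. Semantics: $\llbracket\epsilon\rrbracket=\{\epsilon\}$, $\llbracket A\rrbracket=A$, $\llbracket r+s\rrbracket=\llbracket r\rrbracket\cup\llbracket s\rrbracket$, $\llbracket r\cdot s\rrbracket$ the concatenation, $\llbracket r^*\rrbracket=\llbracket r\rrbracket^*$, $\llbracket r\&s\rrbracket=\llbracket r\rrbracket\cap\llbracket s\rrbracket$, $\llbracket\neg r\rrbracket=\Sigma^*\setminus\llbracket r\rrbracket$. Nullability: $\nu(\epsilon)=\nu(r^* )=\mathit{true}$, $\nu(A)=\mathit{false}$, $\nu(r+s)=\nu(r)\vee\nu(s)$, $\nu(r\cdot s)=\nu(r\&s)=\nu(r)\wedge\nu(s)$, $\nu(\neg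 r)=\neg\nu(r)$. Brzozowski derivative for $a\in\Sigma$: $\partial_a(\epsilon)=\emptyset$; $\partial_a(A)=\epsilon$ if $a\in A$, else $\emptyset$; $\partial_a(r+s)=\partial_a(r)+\partial_a(s)$; $\partial_a(r\cdot s)=\partial_a(r)\cdot s+\partial_a(s)$ if $\nu(r)$, and $\partial_a(r)\cdot s$ otherwise; $\partial_a(r^* )=\partial_a(r)\cdot r^*$; $\partial_a(r\&s)=\partial_a(r)\&\partial_a(s)$; $\partial_a(\neg r)=\neg\partial_a(r)$. Join of sets of pairwise disjoint literals: $\mathfrak L_1\Join\mathfrak L_2=\{A_1\cap A_2,\ A_1\cap\overline{\bigcup\mathfrak L_2},\ \overline{\bigcup\mathfrak L_1}\cap A_2 \mid A_1\in\mathfrak L_1, A_2\in\mathfrak L_2\}$; also $\mathfrak L_1\sqcap\mathfrak L_2=\{A_1\cap A_2\mid A_1\in\mathfrak L_1,A_2\in\mathfrak L_2\}$. Next literals: $\mathrm{next}(\epsilon)=\{\emptyset\}$; $\mathrm{next}(A)=\{A\}$; $\mathrm{next}(r+s)=\mathrm{next}(r)\Join\mathrm{next}(s)$; $\mathrm{next}(r\cdot s)=\mathrm{next}(r)\Join\mathrm{next}(s)$ if $\nu(r)$ and $\mathrm{next}(r)$ otherwise; $\mathrm{next}(r^* )=\mathrm{next}(r)$; $\mathrm{next}(r\&s)=\mathrm{next}(r)\sqcap\mathrm{next}(s)$; $\mathrm{next}(\neg r)=\mathrm{next}(r)\cup\{\bigcap_{A\in\mathrm{next}(r)}\overline{A}\}$.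 *)

theory Defs
  imports Main "HOL-Library.Countable"
begin

datatype 'a ere =
    Eps
  | Lit "'a set"
  | Plus "'a ere" "'a ere"
  | Conc "'a ere" "'a ere"
  | Star "'a ere"
  | Inter "'a ere" "'a ere"
  | Neg "'a ere"

fun lits :: "'a ere \<Rightarrow> 'a set set" where
  "lits Eps = {}"
| "lits (Lit A) = {A}"
| "lits (Plus r s) = lits r \<union> lits s"
| "lits (Conc r s) = lits r \<union> lits s"
| "lits (Star r) = lits r"
| "lits (Inter r s) = lits r \<union> lits s"
| "lits (Neg r) = lits r"

definition literal_family :: "'a set set \<Rightarrow> bool" where
  "literal_family U \<longleftrightarrow> {} \<in> U \<and> UNIV \<in> U \<and> (\<forall>a. {a} \<in> U) \<and>
     (\<forall>A\<in>U. \<forall>B\<in>U. A \<union> B \<in> U \<and> A \<inter> B \<in> U) \<and> (\<forall>A\<in>U. - A \<in> U)"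

definition conc :: "'a list set \<Rightarrow> 'a list set \<Rightarrow> 'a list set" where
  "conc L M = {u @ v | u v. u \<in> L \<and> v \<in> M}"

definition star :: "'a list set \<Rightarrow> 'a list set" where
  "star L = (\<Union>n. ((conc L) ^^ n) {[]})"

fun lang :: "'a ere \<Rightarrow> 'a list set" where
  "lang Eps = {[]}"
| "lang (Lit A) = {[a] | a. a \<in> A}"
| "lang (Plus r s) = lang r \<union> lang s"
| "lang (Conc r s) = conc (lang r) (lang s)"
| "lang (Star r) = star (lang r)"
| "lang (Inter r s) = lang r \<inter> lang s"
| "lang (Neg r) = - lang r"

fun nullable :: "'a ere \<Rightarrow> bool" where
  "nullable Eps = True"
| "nullable (Lit A) = False"
| "nullable (Plus r s) = (nullable r \<or> nullable s)"
| "nullable (Conc r s) = (nullable r \<and> nullable s)"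
| "nullable (Star r) = True"
| "nullable (Inter r s) = (nullable r \<and> nullable s)"
| "nullable (Neg r) = (\<not> nullable r)"

fun deriv :: "'a \<Rightarrow> 'a ere \<Rightarrow> 'a ere" where
  "deriv a Eps = Lit {}"
| "deriv a (Lit A) = (if a \<in> A then Eps else Lit {})"
| "deriv a (Plus r s) = Plus (deriv a r) (deriv a s)"
| "deriv a (Conc r s) =
     (if nullable r then Plus (Conc (deriv a r) s) (deriv a s) else Conc (deriv a r) s)"
| "deriv a (Star r) = Conc (deriv a r) (Star r)"
| "deriv a (Inter r s) = Inter (deriv a r) (deriv a s)"
| "deriv a (Neg r) = Neg (deriv a r)"

definition join :: "'a set set \<Rightarrow> 'a set set \<Rightarrow> 'a set set" where
  "join L1 L2 =
     {A1 \<inter> A2 | A1 A2. A1 \<in> L1 \<and> A2 \<in> L2} \<union>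
     {A1 \<inter> - \<Union>L2 | A1 A2. A1 \<in> L1 \<and> A2 \<in> L2} \<union>
     {- \<Union>L1 \<inter> A2 | A1 A2. A1 \<in> L1 \<and> A2 \<in> L2}"

definition meet :: "'a set set \<Rightarrow> 'a set set \<Rightarrow> 'a set set" where
  "meet L1 L2 = {A1 \<inter> A2 | A1 A2. A1 \<in> L1 \<and> A2 \<in> L2}"

fun next_lits :: "'a ere \<Rightarrow> 'a set set" where
  "next_lits Eps = {{}}"
| "next_lits (Lit A) = {A}"
| "next_lits (Plus r s) = join (next_lits r) (next_lits s)"
| "next_lits (Conc r s) =
     (if nullable r then join (next_lits r) (next_lits s) else next_lits r)"
| "next_lits (Star r) = next_lits r"
| "next_lits (Inter r s) = meet (next_lits r) (next_lits s)"
| "next_lits (Neg r) = next_lits r \<union> {\<Inter>A\<in>next_lits r. - A}"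

end

theory Submission
  imports Defs
begin

(* Call a map f from symbols to languages "adapted" to a family L of
   literals if f is constant on every literal of L and f vanishes outside the union
   of L.  The theorem says exactly that a \<mapsto> lang (deriv a r) is adapted to
   next_lits r.  Each constructor uses one closure property:
     - the join of two families handles union of languages (Plus, nullable Conc);
     - the meet handles intersection (Inter);
     - post-composition with a map sending {} to {} preserves adaptedness (Conc, Star);
     - adding the complement of the union as a new literal handles negation (Neg).
   The join step needs both families nonempty, which holds for every next_lits r. *)

definition adapted :: "('a \<Rightarrow> 'b set) \<Rightarrow> 'a set set \<Rightarrow> bool" where
  "adapted f L \<longleftrightarrow> (\<forall>A\<in>L. \<forall>a\<in>A. \<forall>b\<in>A. f a = f b) \<and> (\<forall>a. a \<notin> \<Union>L \<longrightarrow> f a = {})"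

(* The definition is used only through these three rules; unfolding it directly makes
   the simplifier loop on the equation f a = f b. *)
lemma adaptedI:
  assumes "\<And>A a b. A \<in> L \<Longrightarrow> a \<in> A \<Longrightarrow> b \<in> A \<Longrightarrow> f a = f b"
    and "\<And>a. a \<notin> \<Union>L \<Longrightarrow> f a = {}"
  shows "adapted f L"
  using assms unfolding adapted_def by blast

lemma adapted_constD: "adapted f L \<Longrightarrow> A \<in> L \<Longrightarrow> a \<in> A \<Longrightarrow> b \<in> A \<Longrightarrow> f a = f b"
  unfolding adapted_def by blast

lemma adapted_emptyD: "adapted f L \<Longrightarrow> a \<notin> \<Union>L \<Longrightarrow> f a = {}"
  unfolding adapted_def by blast

(* Union of languages: join L1 L2 refines L1 and L2, and its union covers both unions. *)
lemma adapted_join: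
  assumes f: "adapted f L1" and g: "adapted g L2" and "L1 \<noteq> {}" "L2 \<noteq> {}"
  shows "adapted (\<lambda>a. f a \<union> g a) (join L1 L2)"
proof (rule adaptedI)
  fix A a b assume "A \<in> join L1 L2" "a \<in> A" "b \<in> A"
  then consider (both) A1 A2 where "A1 \<in> L1" "A2 \<in> L2" "a \<in> A1 \<inter> A2" "b \<in> A1 \<inter> A2"
    | (left) A1 where "A1 \<in> L1" "a \<in> A1 - \<Union>L2" "b \<in> A1 - \<Union>L2"
    | (right) A2 where "A2 \<in> L2" "a \<in> A2 - \<Union>L1" "b \<in> A2 - \<Union>L1"
    unfolding join_def by blast
  then show "f a \<union> g a = f b \<union> g b"
  proof cases
    case both
    then show ?thesis
      using adapted_constD[OF f, of A1 a b] adapted_constD[OF g, of A2 a b] by simp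
  next
    case left
    then show ?thesis
      using adapted_constD[OF f, of A1 a b] adapted_emptyD[OF g, of a]
        adapted_emptyD[OF g, of b] by simp
  next
    case right
    then show ?thesis
      using adapted_constD[OF g, of A2 a b] adapted_emptyD[OF f, of a]
        adapted_emptyD[OF f, of b] by simp
  qed
next
  fix a assume a: "a \<notin> \<Union>(join L1 L2)"
  obtain B1 B2 where B1: "B1 \<in> L1" and B2: "B2 \<in> L2" using assms(3,4) by blast
  have "A1 \<inter> A2 \<in> join L1 L2" if "A1 \<in> L1" "A2 \<in> L2" for A1 A2
    using that unfolding join_def by blast
  moreover have "A1 \<inter> - \<Union>L2 \<in> join L1 L2" if "A1 \<in> L1" for A1
    using that B2 unfolding join_def by blast
  moreover have "- \<Union>L1 \<inter> A2 \<in> join L1 L2" if "A2 \<in> L2" for A2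
    using that B1 unfolding join_def by blast
  ultimately have "a \<notin> \<Union>L1" "a \<notin> \<Union>L2" using a by blast+
  then show "f a \<union> g a = {}" using adapted_emptyD[OF f, of a] adapted_emptyD[OF g, of a] by simp
qed

lemma adapted_meet:
  assumes f: "adapted f L1" and g: "adapted g L2"
  shows "adapted (\<lambda>a. f a \<inter> g a) (meet L1 L2)"
proof (rule adaptedI)
  fix A a b assume "A \<in> meet L1 L2" "a \<in> A" "b \<in> A"
  then obtain A1 A2 where "A1 \<in> L1" "A2 \<in> L2" "a \<in> A1 \<inter> A2" "b \<in> A1 \<inter> A2"
    unfolding meet_def by blast
  then show "f a \<inter> g a = f b \<inter> g b"
    using adapted_constD[OF f, of A1 a b] adapted_constD[OF g, of A2 a b] by simp
next
  fix a assume "a \<notin> \<Union>(meet L1 L2)"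
  then have "a \<notin> \<Union>L1 \<or> a \<notin> \<Union>L2" unfolding meet_def by blast
  then show "f a \<inter> g a = {}" using adapted_emptyD[OF f, of a] adapted_emptyD[OF g, of a] by auto
qed

(* Right concatenation with a fixed language and similar operations keep {} fixed. *)
lemma adapted_comp:
  assumes f: "adapted f L" and "h {} = {}"
  shows "adapted (\<lambda>a. h (f a)) L"
proof (rule adaptedI)
  fix A a b assume "A \<in> L" "a \<in> A" "b \<in> A"
  then show "h (f a) = h (f b)" using adapted_constD[OF f, of A a b] by simp
next
  fix a assume "a \<notin> \<Union>L"
  then show "h (f a) = {}" using adapted_emptyD[OF f, of a] assms(2) by simp
qed

(* Complement: the added literal consists of the symbols outside \<Union>L, where f is {};
   the extended family covers every symbol, so the vanishing condition is vacuous. *)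
lemma adapted_neg:
  assumes f: "adapted f L"
  shows "adapted (\<lambda>a. - f a) (L \<union> {\<Inter>A\<in>L. - A})"
proof (rule adaptedI)
  fix A a b assume A: "A \<in> L \<union> {\<Inter>A\<in>L. - A}" "a \<in> A" "b \<in> A"
  have "f a = f b"
  proof (cases "A \<in> L")
    case True
    then show ?thesis using adapted_constD[OF f, of A a b] A(2,3) by simp
  next
    case False
    then have "a \<notin> \<Union>L" "b \<notin> \<Union>L" using A by auto
    then show ?thesis using adapted_emptyD[OF f, of a] adapted_emptyD[OF f, of b] by simp
  qed
  then show "- f a = - f b" by simp
next
  fix a assume "a \<notin> \<Union>(L \<union> {\<Inter>A\<in>L. - A})"
  then have False by blast
  then show "- f a = {}" ..
qed

lemma next_lits_nonempty: "next_lits r \<noteq> {}"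
  by (induction r) (auto simp: join_def meet_def)

lemma conc_empty_left [simp]: "conc {} M = {}"
  by (simp add: conc_def)

lemma deriv_adapted_next_lits: "adapted (\<lambda>a. lang (deriv a r)) (next_lits r)"
proof (induction r)
  case Eps
  show ?case by (simp add: adapted_def)
next
  case (Lit A)
  show ?case by (simp add: adapted_def)
next
  case (Plus r s)
  show ?case
    using adapted_join[OF Plus.IH next_lits_nonempty next_lits_nonempty] by simp
next
  case (Conc r s)
  have r': "adapted (\<lambda>a. conc (lang (deriv a r)) (lang s)) (next_lits r)"
    using adapted_comp[OF Conc.IH(1), of "\<lambda>L. conc L (lang s)"] by simp
  show ?case
  proof (cases "nullable r")
    case True
    then show ?thesis
      using adapted_join[OF r' Conc.IH(2) next_lits_nonempty next_lits_nonempty] by simp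
  next
    case False
    then show ?thesis using r' by simp
  qed
next
  case (Star r)
  show ?case
    using adapted_comp[OF Star.IH, of "\<lambda>L. conc L (lang (Star r))"] by simp
next
  case (Inter r s)
  show ?case using adapted_meet[OF Inter.IH] by simp
next
  case (Neg r)
  show ?case using adapted_neg[OF Neg.IH] by simp
qed

theorem lemma3:
  fixes r :: "'a::countable ere" and U :: "'a set set"
  assumes "literal_family U" and "lits r \<subseteq> U"
  shows "(\<forall>A\<in>next_lits r. \<forall>a\<in>A. \<forall>b\<in>A. lang (deriv a r) = lang (deriv b r))
       \<and> (\<forall>a. a \<notin> \<Union>(next_lits r) \<longrightarrow> lang (deriv a r) = {})"
  using deriv_adapted_next_lits[of r] unfolding adapted_def .

end
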